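(* Fix $\phi\in\mathbb{R}^d$ with $\mu=\|\phi\|^2>0$, a one-hot label ${\bm y}\in\{0,1\}^V$, and let $f({\bm z},{\bm y})=-\sum_k y_k\log p_k({\bm z})$ with ${\bm p}({\bm z})=\mathrm{softmax}({\bm z})$. Let $\kappa\ge0$, $|\eta|\in(0,1]$, $|\rho|\le\kappa\sqrt{|\eta|}$. Given ${\bm W}^t\in\mathbb{R}^{V\times d}$, let ${\bm z}^t={\bm W}^t\phi$, ${\bm p}^t={\bm p}({\bm z}^t)$, ${\bm g}^t={\bm p}^t-{\bm y}$, ${\bm H}^t_{{\bm z}}=\mathrm{diag}({\bm p}^t)-{\bm p}^t({\bm p}^t)^\top$, and let ${\bm W}^{t+1}$ be obtained by one SAM step: with $F({\bm W})=f({\bm W}\phi,{\bm y})$, $\widetilde{{\bm W}}^t={\bm W}^t+\rho\nabla F({\bm W}^t)/\|\nabla F({\bm W}^t)\|$ (perturbation $0$ if ${\bm g}^t=0$) and ${\bm W}^{t+1}={\bm W}^t-\eta\nabla F(\widetilde{{\bm W}}^t)$; let ${\bm g}^{t+1}={\bm p}({\bm W}^{t+1}\phi)-{\bm y}$, and $\tilde\rho^{\,t}=\rho\sqrt\mu/\|{\bm g}^t\|$ (with $\tilde\rho^{\,t}=0$ if ${\bm g}^t=0$). Let ${\bm H}^t_{{\bm z}}=\sum_{k=1}^{V-1}\lambda_k^t{\bm v}_k^t({\bm v}_k^t)^\top$ be a spectral decomposition with $\lambda_k^t>0$ and $({\bm v}_k^t)^\top{\bm v}_\ell^t=\delta_{k\ell}$,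 and define $e_k^t=({\bm v}_k^t)^\top{\bm g}^t$ for $k=1,\dots,V-1$. Then there exists a constant $C>0$ (depending only on $V,\mu,\kappa$) such that for all $k=1,\dots,V-1$, $$({\bm v}_k^t)^\top{\bm g}^{t+1}=\Big(1-\eta\mu\big[\lambda_k^t+\tilde\rho^{\,t}(\lambda_k^t)^2\big]\Big)e_k^t+r_k^t,\qquad |r_k^t|\le C\eta^2.$$
   Context: $\|\cdot\|$ is the Euclidean norm on vectors and Frobenius norm on matrices. The gradient in ${\bm W}$ is $\nabla F({\bm W})=(\nabla_{\bm z} f({\bm W}\phi,{\bm y}))\phi^\top$. *)

theory Defs
  imports "HOL-Analysis.Analysis"
begin

(* Vectors in R^V: real^'v (V = CARD('v)).
   Input dimension d is an explicit natural number (so that the constant C can be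
   chosen independently of d): phi :: nat => real, entries j < d.
   A matrix W in R^{V x d} is given by its columns: W :: nat => real^'v, column j for j < d. *)

definition softmax :: "real^'v \<Rightarrow> real^'v" where
  "softmax z = (\<chi> k. exp (z $ k) / (\<Sum>j\<in>UNIV. exp (z $ j)))"

definition one_hot :: "real^'v \<Rightarrow> bool" where
  "one_hot y \<longleftrightarrow> (\<exists>c. y = (\<chi> k. if k = c then 1 else 0))"

definition ce_loss :: "real^'v \<Rightarrow> real^'v \<Rightarrow> real" where
  "ce_loss z y = - (\<Sum>k\<in>UNIV. y $ k * ln (softmax z $ k))"

definition sqnorm_d :: "nat \<Rightarrow> (nat \<Rightarrow> real) \<Rightarrow> real" where
  "sqnorm_d d phi = (\<Sum>j<d. (phi j)\<^sup>2)"

definition matvec :: "nat \<Rightarrow> (nat \<Rightarrow> real^'v) \<Rightarrow> (nat \<Rightarrow> real) \<Rightarrow> real^'v" where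
  "matvec d W phi = (\<Sum>j<d. phi j *\<^sub>R W j)"

definition frob :: "nat \<Rightarrow> (nat \<Rightarrow> real^'v) \<Rightarrow> real" where
  "frob d W = sqrt (\<Sum>j<d. (norm (W j))\<^sup>2)"

(* gradient of F(W) = f(W phi, y):  (p(W phi) - y) phi^T, column j = phi_j (p - y) *)
definition gradF :: "nat \<Rightarrow> (nat \<Rightarrow> real) \<Rightarrow> real^'v \<Rightarrow> (nat \<Rightarrow> real^'v) \<Rightarrow> (nat \<Rightarrow> real^'v)" where
  "gradF d phi y W = (\<lambda>j. phi j *\<^sub>R (softmax (matvec d W phi) - y))"

definition sam_step :: "nat \<Rightarrow> (nat \<Rightarrow> real) \<Rightarrow> real^'v \<Rightarrow> real \<Rightarrow> real \<Rightarrow>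
    (nat \<Rightarrow> real^'v) \<Rightarrow> (nat \<Rightarrow> real^'v)" where
  "sam_step d phi y \<eta> \<rho> W =
    (let g = softmax (matvec d W phi) - y;
         G = gradF d phi y W;
         Wt = (if g = 0 then W else (\<lambda>j. W j + (\<rho> / frob d G) *\<^sub>R G j))
     in (\<lambda>j. W j - \<eta> *\<^sub>R gradF d phi y Wt j))"

definition hess_z :: "real^'v \<Rightarrow> real^'v^'v" where
  "hess_z p = (\<chi> i j. (if i = j then p $ i else 0) - p $ i * p $ j)"

definition outer :: "real^'v \<Rightarrow> real^'v \<Rightarrow> real^'v^'v" where
  "outer u w = (\<chi> i j. u $ i * w $ j)"

end

theory Submission
  imports Defs
begin

(* Both gradients in a SAM step are rank-one matrices g phi^T, so the step moves the logits
   z = W phi along a single vector: the perturbed logits are z + rho~ g and the new logits are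
   z - eta mu g~, where g~ is the residual at the perturbed logits.  Expanding softmax to second
   order around z (along any line its second derivative is O(|h|^2), uniformly in z) gives
   g~ = g + rho~ H g + O(rho~^2 |g|^2) and g' = g - eta mu H g~ + O(eta^2 mu^2 |g~|^2).
   Projecting onto an eigenvector v_k of H replaces H by lambda_k <= 1, and both remainders are
   O(eta^2): rho~^2 |g|^2 = rho^2 mu <= kappa^2 |eta| mu, and |g~|^2 <= 2 for a one-hot label. *)

lemma softmax_pos: "softmax z $ i > 0"
  by (simp add: softmax_def sum_pos)

lemma sum_softmax: "(\<Sum>i\<in>UNIV. softmax z $ i) = 1"
proof -
  have "(\<Sum>j\<in>UNIV. exp (z $ j)) > 0" by (simp add: sum_pos)
  then show ?thesis by (simp add: softmax_def sum_divide_distrib[symmetric])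
qed

lemma softmax_le_1: "softmax z $ i \<le> 1"
proof -
  have "softmax z $ i \<le> (\<Sum>i\<in>UNIV. softmax z $ i)"
    by (rule member_le_sum) (auto simp: less_imp_le softmax_pos)
  then show ?thesis by (simp add: sum_softmax)
qed

lemma hess_z_mult_vec: "(hess_z p *v u) $ i = p $ i * (u $ i - (\<Sum>j\<in>UNIV. p $ j * u $ j))"
proof -
  have "(hess_z p *v u) $ i = (\<Sum>j\<in>UNIV. (if i = j then p $ i * u $ j else 0) - p $ i * (p $ j * u $ j))"
    unfolding hess_z_def matrix_vector_mult_def vec_lambda_beta
    by (intro sum.cong) (auto simp: algebra_simps)
  also have "\<dots> = p $ i * (u $ i - (\<Sum>j\<in>UNIV. p $ j * u $ j))"
    by (simp add: sum_subtractf sum_distrib_left right_diff_distrib)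
  finally show ?thesis .
qed

lemma has_real_derivative_softmax_line:
  "((\<lambda>t. softmax (z + t *\<^sub>R h) $ i) has_real_derivative
     (hess_z (softmax (z + t *\<^sub>R h)) *v h) $ i) (at t)"
proof -
  define E where "E = (\<lambda>j t. exp (z $ j + t * h $ j))"
  define S where "S = (\<lambda>t. \<Sum>j\<in>UNIV. E j t)"
  have S_pos: "S t > 0" by (simp add: S_def E_def sum_pos)
  have softmax_line: "softmax (z + t *\<^sub>R h) $ j = E j t / S t" for j t
    by (simp add: softmax_def S_def E_def)
  have "((\<lambda>t. E i t / S t) has_real_derivative
      ((E i t * h $ i) * S t - E i t * (\<Sum>j\<in>UNIV. E j t * h $ j)) / (S t * S t)) (at t)"
    unfolding S_def E_def using S_pos[unfolded S_def E_def]
    by (auto intro!: derivative_eq_intros)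
  moreover have "((E i t * h $ i) * S t - E i t * (\<Sum>j\<in>UNIV. E j t * h $ j)) / (S t * S t)
      = E i t / S t * (h $ i - (\<Sum>j\<in>UNIV. E j t / S t * h $ j))"
    using S_pos by (simp add: field_simps sum_divide_distrib[symmetric])
  ultimately show ?thesis by (simp add: softmax_line hess_z_mult_vec)
qed

definition softmax_line_curvature :: "real^'v \<Rightarrow> real^'v \<Rightarrow> 'v \<Rightarrow> real" where
  "softmax_line_curvature w h i =
    (let q = softmax w; m = (\<Sum>j\<in>UNIV. q $ j * h $ j)
     in q $ i * (h $ i - m)\<^sup>2 - q $ i * (\<Sum>j\<in>UNIV. q $ j * (h $ j - m) * h $ j))"

lemma has_real_derivative_hess_softmax_line:
  "((\<lambda>t. (hess_z (softmax (z + t *\<^sub>R h)) *v h) $ i) has_real_derivative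
     softmax_line_curvature (z + t *\<^sub>R h) h i) (at t)"
proof -
  have d: "((\<lambda>t. softmax (z + t *\<^sub>R h) $ j) has_real_derivative D) (at t within T)"
    if "D = (hess_z (softmax (z + t *\<^sub>R h)) *v h) $ j" for j D t T
    using that has_real_derivative_softmax_line has_field_derivative_at_within by blast
  show ?thesis
    unfolding hess_z_mult_vec softmax_line_curvature_def Let_def
    by (rule derivative_eq_intros d refl)+ (simp_all add: hess_z_mult_vec power2_eq_square)
qed

lemma abs_softmax_line_curvature_le: "\<bar>softmax_line_curvature w h i\<bar> \<le> 6 * (norm h)\<^sup>2"
proof -
  define q where "q = softmax w"
  define N where "N = norm h"
  define m where "m = (\<Sum>j\<in>UNIV. q $ j * h $ j)"
  have h_le: "\<bar>h $ j\<bar> \<le> N" for j unfolding N_def by (rule component_le_norm_cart)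
  have q_nonneg: "0 \<le> q $ j" and q_le: "q $ j \<le> 1" for j
    unfolding q_def using softmax_pos less_imp_le softmax_le_1 by auto
  have "\<bar>m\<bar> \<le> (\<Sum>j\<in>UNIV. q $ j * N)"
    unfolding m_def
    by (rule order.trans[OF sum_abs sum_mono]) (simp add: abs_mult q_nonneg h_le mult_left_mono)
  then have m_le: "\<bar>m\<bar> \<le> N" by (simp add: sum_distrib_right[symmetric] q_def sum_softmax)
  have dev_le: "\<bar>h $ j - m\<bar> \<le> 2 * N" for j using h_le[of j] m_le by linarith
  have "\<bar>\<Sum>j\<in>UNIV. q $ j * (h $ j - m) * h $ j\<bar> \<le> (\<Sum>j\<in>UNIV. q $ j * (2 * N * N))"
  proof (rule order.trans[OF sum_abs sum_mono])
    fix j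
    have "\<bar>(h $ j - m) * h $ j\<bar> \<le> 2 * N * N"
      unfolding abs_mult by (intro mult_mono dev_le h_le) (auto simp: N_def)
    then show "\<bar>q $ j * (h $ j - m) * h $ j\<bar> \<le> q $ j * (2 * N * N)"
      by (simp add: abs_mult q_nonneg mult_left_mono mult.assoc)
  qed
  then have var_le: "\<bar>\<Sum>j\<in>UNIV. q $ j * (h $ j - m) * h $ j\<bar> \<le> 2 * N * N"
    by (simp add: sum_distrib_right[symmetric] q_def sum_softmax)
  have "(h $ i - m)\<^sup>2 \<le> (2 * N)\<^sup>2"
    using power_mono[OF dev_le[of i], of 2] by simp
  then have "\<bar>q $ i * (h $ i - m)\<^sup>2\<bar> \<le> 1 * (2 * N)\<^sup>2"
    using mult_left_le_one_le[of "(h $ i - m)\<^sup>2" "q $ i"] q_nonneg[of i] q_le[of i]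
    by (simp add: abs_mult)
  moreover have "\<bar>q $ i * (\<Sum>j\<in>UNIV. q $ j * (h $ j - m) * h $ j)\<bar> \<le> 1 * (2 * N * N)"
    unfolding abs_mult by (intro mult_mono var_le) (use q_nonneg q_le in auto)
  ultimately show ?thesis
    unfolding softmax_line_curvature_def Let_def q_def[symmetric] m_def[symmetric] N_def[symmetric]
    by (simp add: power2_eq_square)
qed

lemma abs_taylor2_remainder_le:
  fixes f f' f'' :: "real \<Rightarrow> real"
  assumes "\<And>t. (f has_real_derivative f' t) (at t)"
    and "\<And>t. (f' has_real_derivative f'' t) (at t)"
    and "\<And>t. \<bar>f'' t\<bar> \<le> B"
  shows "\<bar>f 1 - f 0 - f' 0\<bar> \<le> B"
proof -
  have "((\<lambda>t. f t - t * f' 0) has_real_derivative (f' t - f' 0)) (at t)" for t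
    by (rule derivative_eq_intros assms(1) refl | simp)+
  from MVT2[of 0 1 "\<lambda>t. f t - t * f' 0", OF _ this]
  obtain c where c: "0 < c" "c < 1" "f 1 - f 0 - f' 0 = f' c - f' 0" by auto
  from MVT2[of 0 c f' f'', OF c(1) assms(2)]
  obtain c' where "f' c - f' 0 = c * f'' c'" by auto
  then have "\<bar>f 1 - f 0 - f' 0\<bar> = c * \<bar>f'' c'\<bar>" using c by (simp add: abs_mult)
  also have "\<dots> \<le> 1 * B" using c assms(3)[of c'] by (intro mult_mono) auto
  finally show ?thesis by simp
qed

lemma norm_softmax_taylor_remainder_le:
  fixes z h :: "real^'v"
  shows "norm (softmax (z + h) - softmax z - hess_z (softmax z) *v h) \<le> 6 * real CARD('v) * (norm h)\<^sup>2"
proof -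
  have "\<bar>softmax (z + h) $ i - softmax z $ i - (hess_z (softmax z) *v h) $ i\<bar> \<le> 6 * (norm h)\<^sup>2" for i
    using abs_taylor2_remainder_le[where f="\<lambda>t. softmax (z + t *\<^sub>R h) $ i"
        and f'="\<lambda>t. (hess_z (softmax (z + t *\<^sub>R h)) *v h) $ i",
        OF has_real_derivative_softmax_line has_real_derivative_hess_softmax_line
        abs_softmax_line_curvature_le]
    by simp
  then have "(\<Sum>i\<in>UNIV. \<bar>(softmax (z + h) - softmax z - hess_z (softmax z) *v h) $ i\<bar>)
      \<le> (\<Sum>i\<in>(UNIV::'v set). 6 * (norm h)\<^sup>2)"
    by (intro sum_mono) simp
  then show ?thesis
    using norm_le_l1_cart[of "softmax (z + h) - softmax z - hess_z (softmax z) *v h"] by simp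
qed

lemma matvec_add_rank_one:
  "matvec d (\<lambda>j. W j + c *\<^sub>R (phi j *\<^sub>R g)) phi = matvec d W phi + (c * sqnorm_d d phi) *\<^sub>R g"
  by (simp add: matvec_def sqnorm_d_def sum.distrib scaleR_sum_left power2_eq_square
      sum_distrib_left algebra_simps)

lemma frob_rank_one: "frob d (\<lambda>j. phi j *\<^sub>R g) = sqrt (sqnorm_d d phi) * norm g"
  by (simp add: frob_def sqnorm_d_def power_mult_distrib sum_distrib_right[symmetric] real_sqrt_mult)

lemma matvec_sam_step:
  fixes d :: nat and phi :: "nat \<Rightarrow> real" and W :: "nat \<Rightarrow> real^'v" and y :: "real^'v"
    and \<eta> \<rho> :: real
  defines "z \<equiv> matvec d W phi" and "\<mu> \<equiv> sqnorm_d d phi"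
  defines "g \<equiv> softmax z - y"
  defines "\<rho>t \<equiv> if g = 0 then 0 else \<rho> * sqrt \<mu> / norm g"
  shows "matvec d (sam_step d phi y \<eta> \<rho> W) phi = z - (\<eta> * \<mu>) *\<^sub>R (softmax (z + \<rho>t *\<^sub>R g) - y)"
proof -
  have grad: "gradF d phi y W = (\<lambda>j. phi j *\<^sub>R g)" by (simp add: gradF_def g_def z_def)
  have scale: "\<rho> / frob d (\<lambda>j. phi j *\<^sub>R g) * \<mu> = \<rho>t" if "g \<noteq> 0"
  proof (cases "\<mu> = 0")
    case False
    then have "\<mu> = sqrt \<mu> * sqrt \<mu>" by (simp add: \<mu>_def sqnorm_d_def sum_nonneg)
    then show ?thesis using that False by (simp add: \<rho>t_def frob_rank_one \<mu>_def[symmetric] field_simps)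
  qed (simp add: \<rho>t_def)
  have perturbed: "matvec d (if g = 0 then W
      else (\<lambda>j. W j + (\<rho> / frob d (gradF d phi y W)) *\<^sub>R gradF d phi y W j)) phi = z + \<rho>t *\<^sub>R g"
  proof (cases "g = 0")
    case True
    then show ?thesis by (simp add: z_def \<rho>t_def)
  next
    case False
    then show ?thesis
      by (simp only: if_False grad matvec_add_rank_one scale[OF False] flip: z_def \<mu>_def)
  qed
  have "sam_step d phi y \<eta> \<rho> W = (\<lambda>j. W j + (- \<eta>) *\<^sub>R (phi j *\<^sub>R (softmax (z + \<rho>t *\<^sub>R g) - y)))"
    unfolding sam_step_def Let_def z_def[symmetric] g_def[symmetric]
    by (simp add: gradF_def perturbed)
  then show ?thesis by (simp only: matvec_add_rank_one flip: z_def \<mu>_def) simp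
qed

lemma spectral_sum_mult_vec:
  fixes v :: "'k \<Rightarrow> real^'n"
  shows "(\<Sum>l\<in>S. lam l *\<^sub>R outer (v l) (v l)) *v x = (\<Sum>l\<in>S. (lam l * (v l \<bullet> x)) *\<^sub>R v l)"
  by (simp add: vec_eq_iff matrix_vector_mult_def outer_def inner_vec_def
      sum_distrib_left sum_distrib_right algebra_simps sum.swap[of _ S])

lemma inner_spectral_sum_mult_vec:
  fixes v :: "'k \<Rightarrow> real^'n"
  assumes "finite S" and "\<forall>k\<in>S. \<forall>l\<in>S. v k \<bullet> v l = (if k = l then 1 else 0)" and "k \<in> S"
  shows "v k \<bullet> ((\<Sum>l\<in>S. lam l *\<^sub>R outer (v l) (v l)) *v x) = lam k * (v k \<bullet> x)"
proof -
  have "v k \<bullet> ((\<Sum>l\<in>S. lam l *\<^sub>R outer (v l) (v l)) *v x) = (\<Sum>l\<in>S. lam l * (v l \<bullet> x) * (v k \<bullet> v l))"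
    by (simp add: spectral_sum_mult_vec inner_sum_right)
  also have "\<dots> = (\<Sum>l\<in>S. if l = k then lam k * (v k \<bullet> x) else 0)"
    using assms(2,3) by (intro sum.cong) auto
  finally show ?thesis using assms(1,3) by simp
qed

lemma inner_hess_z_softmax_le: "u \<bullet> (hess_z (softmax z) *v u) \<le> u \<bullet> u"
proof -
  define p where "p = softmax z"
  define m where "m = (\<Sum>j\<in>UNIV. p $ j * u $ j)"
  have "u \<bullet> (hess_z p *v u) = (\<Sum>i\<in>UNIV. p $ i * (u $ i)\<^sup>2) - m\<^sup>2"
    by (simp add: inner_vec_def hess_z_mult_vec m_def[symmetric] right_diff_distrib sum_subtractf
        sum_distrib_left sum_distrib_right power2_eq_square algebra_simps) (simp add: m_def sum_distrib_left)
  also have "\<dots> \<le> (\<Sum>i\<in>UNIV. (u $ i)\<^sup>2)"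
    by (smt (verit) sum_mono zero_le_power2 mult_left_le_one_le softmax_le_1 softmax_pos p_def)
  also have "\<dots> = u \<bullet> u" by (simp add: inner_vec_def power2_eq_square)
  finally show ?thesis by (simp add: p_def)
qed

lemma norm_softmax_minus_one_hot_le:
  assumes "one_hot y"
  shows "(norm (softmax w - y))\<^sup>2 \<le> 2"
proof -
  obtain c where y: "y = (\<chi> k. if k = c then 1 else 0)" using assms by (auto simp: one_hot_def)
  have "(norm (softmax w - y))\<^sup>2 = (\<Sum>i\<in>UNIV. (softmax w $ i - y $ i)\<^sup>2)"
    by (simp add: norm_vec_def L2_set_def sum_nonneg)
  also have "\<dots> \<le> (\<Sum>i\<in>UNIV. softmax w $ i + y $ i)"
  proof (rule sum_mono)
    fix i
    have "softmax w $ i * softmax w $ i \<le> softmax w $ i"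
      using softmax_pos[of w i] softmax_le_1[of w i] by (simp add: mult_left_le_one_le)
    then show "(softmax w $ i - y $ i)\<^sup>2 \<le> softmax w $ i + y $ i"
      using softmax_pos[of w i] by (auto simp: y power2_eq_square algebra_simps)
  qed
  also have "\<dots> = 2" by (simp add: sum.distrib sum_softmax y)
  finally show ?thesis .
qed

lemma eigencomponent_softmax_sam_update:
  fixes z y v :: "real^'v" and lam r a :: real
  defines "g \<equiv> softmax z - y"
  defines "g' \<equiv> softmax (z + r *\<^sub>R g) - y"
  assumes unit: "v \<bullet> v = 1" and eigen: "\<forall>x. v \<bullet> (hess_z (softmax z) *v x) = lam * (v \<bullet> x)"
    and lam: "0 \<le> lam"
  shows "\<bar>v \<bullet> (softmax (z - a *\<^sub>R g') - y) - (1 - a * (lam + r * lam\<^sup>2)) * (v \<bullet> g)\<bar>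
    \<le> 6 * real CARD('v) * (a\<^sup>2 * (norm g')\<^sup>2 + \<bar>a\<bar> * r\<^sup>2 * (norm g)\<^sup>2)"
proof -
  define K where "K = 6 * real CARD('v)"
  define H where "H = hess_z (softmax z)"
  define R1 where "R1 = softmax (z + (- a) *\<^sub>R g') - softmax z - H *v ((- a) *\<^sub>R g')"
  define R2 where "R2 = softmax (z + r *\<^sub>R g) - softmax z - H *v (r *\<^sub>R g)"
  have proj_le: "\<bar>v \<bullet> x\<bar> \<le> norm x" for x
    using Cauchy_Schwarz_ineq2[of v x] unit by (simp add: norm_eq_sqrt_inner)
  have R1_le: "\<bar>v \<bullet> R1\<bar> \<le> K * (a\<^sup>2 * (norm g')\<^sup>2)"
    using proj_le[of R1] norm_softmax_taylor_remainder_le[of z "(- a) *\<^sub>R g'"]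
    by (simp add: R1_def H_def K_def power_mult_distrib)
  have R2_le: "\<bar>v \<bullet> R2\<bar> \<le> K * (r\<^sup>2 * (norm g)\<^sup>2)"
    using proj_le[of R2] norm_softmax_taylor_remainder_le[of z "r *\<^sub>R g"]
    by (simp add: R2_def H_def K_def power_mult_distrib)
  have lam_le: "lam \<le> 1"
    using eigen inner_hess_z_softmax_le[of v z] unit by simp
  have eigen_H: "v \<bullet> (H *v x) = lam * (v \<bullet> x)" for x
    using eigen by (simp add: H_def)
  have "g' = g + H *v (r *\<^sub>R g) + R2"
    by (simp add: g'_def g_def R2_def)
  then have g'_comp: "v \<bullet> g' = (1 + r * lam) * (v \<bullet> g) + v \<bullet> R2"
    by (simp add: inner_add_right eigen_H algebra_simps)
  have "softmax (z - a *\<^sub>R g') - y = g + H *v ((- a) *\<^sub>R g') + R1"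
    by (simp add: g_def R1_def)
  then have "v \<bullet> (softmax (z - a *\<^sub>R g') - y) = v \<bullet> g - a * lam * (v \<bullet> g') + v \<bullet> R1"
    by (simp add: inner_add_right eigen_H)
  then have "v \<bullet> (softmax (z - a *\<^sub>R g') - y) - (1 - a * (lam + r * lam\<^sup>2)) * (v \<bullet> g)
      = v \<bullet> R1 - a * lam * (v \<bullet> R2)"
    by (simp add: g'_comp power2_eq_square algebra_simps)
  moreover have "lam * \<bar>v \<bullet> R2\<bar> \<le> K * (r\<^sup>2 * (norm g)\<^sup>2)"
    using lam lam_le R2_le by (meson abs_ge_zero mult_left_le_one_le order_trans)
  then have "\<bar>a * lam * (v \<bullet> R2)\<bar> \<le> \<bar>a\<bar> * (K * (r\<^sup>2 * (norm g)\<^sup>2))"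
    using lam by (simp add: abs_mult mult.assoc mult_left_mono)
  ultimately show ?thesis
    using R1_le by (simp add: K_def algebra_simps)
qed

lemma eigencomponent_sam_step:
  fixes d :: nat and phi :: "nat \<Rightarrow> real" and W :: "nat \<Rightarrow> real^'v" and y v :: "real^'v"
    and \<eta> \<rho> \<kappa> lam :: real
  defines "z \<equiv> matvec d W phi" and "\<mu> \<equiv> sqnorm_d d phi"
  defines "g \<equiv> softmax z - y"
  defines "\<rho>t \<equiv> if g = 0 then 0 else \<rho> * sqrt \<mu> / norm g"
  assumes y: "one_hot y" and \<rho>: "\<bar>\<rho>\<bar> \<le> \<kappa> * sqrt \<bar>\<eta>\<bar>"
    and "v \<bullet> v = 1" and "\<forall>x. v \<bullet> (hess_z (softmax z) *v x) = lam * (v \<bullet> x)" and "0 \<le> lam"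
  shows "\<bar>v \<bullet> (softmax (matvec d (sam_step d phi y \<eta> \<rho> W) phi) - y)
      - (1 - \<eta> * \<mu> * (lam + \<rho>t * lam\<^sup>2)) * (v \<bullet> g)\<bar>
    \<le> 6 * real CARD('v) * \<mu>\<^sup>2 * (2 + \<kappa>\<^sup>2) * \<eta>\<^sup>2"
proof -
  define g' where "g' = softmax (z + \<rho>t *\<^sub>R g) - y"
  have \<mu>: "\<mu> \<ge> 0" by (simp add: \<mu>_def sqnorm_d_def sum_nonneg)
  have sam_step: "matvec d (sam_step d phi y \<eta> \<rho> W) phi = z - (\<eta> * \<mu>) *\<^sub>R g'"
    unfolding g'_def \<rho>t_def g_def z_def \<mu>_def by (rule matvec_sam_step)
  have g': "(norm g')\<^sup>2 \<le> 2"
    unfolding g'_def using y by (rule norm_softmax_minus_one_hot_le)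
  have "\<bar>\<rho>\<bar>\<^sup>2 \<le> (\<kappa> * sqrt \<bar>\<eta>\<bar>)\<^sup>2" by (rule power_mono[OF \<rho>]) simp
  then have "\<rho>\<^sup>2 \<le> \<kappa>\<^sup>2 * \<bar>\<eta>\<bar>" by (simp add: power_mult_distrib)
  then have perturbation: "\<rho>t\<^sup>2 * (norm g)\<^sup>2 \<le> \<kappa>\<^sup>2 * \<bar>\<eta>\<bar> * \<mu>"
    using \<mu> by (auto simp: \<rho>t_def power_divide power_mult_distrib mult_right_mono)
  have "\<bar>v \<bullet> (softmax (matvec d (sam_step d phi y \<eta> \<rho> W) phi) - y)
      - (1 - \<eta> * \<mu> * (lam + \<rho>t * lam\<^sup>2)) * (v \<bullet> g)\<bar>
    \<le> 6 * real CARD('v) * ((\<eta> * \<mu>)\<^sup>2 * (norm g')\<^sup>2 + \<bar>\<eta> * \<mu>\<bar> * \<rho>t\<^sup>2 * (norm g)\<^sup>2)"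
    unfolding sam_step g'_def g_def by (rule eigencomponent_softmax_sam_update[OF assms(7-9)])
  also have "\<dots> \<le> 6 * real CARD('v) * ((\<eta> * \<mu>)\<^sup>2 * 2 + \<bar>\<eta> * \<mu>\<bar> * (\<kappa>\<^sup>2 * \<bar>\<eta>\<bar> * \<mu>))"
    using g' perturbation by (simp add: mult.assoc mult_left_mono add_mono)
  also have "\<dots> = 6 * real CARD('v) * \<mu>\<^sup>2 * (2 + \<kappa>\<^sup>2) * \<eta>\<^sup>2"
    using \<mu> by (simp add: abs_mult power2_eq_square algebra_simps)
  finally show ?thesis .
qed

theorem corollary1:
  fixes \<mu> \<kappa> :: real
  assumes "\<mu> > 0" and "\<kappa> \<ge> 0"
  shows "\<exists>C>0. \<forall>(d::nat) (phi::nat \<Rightarrow> real) (y::real^'v) (\<eta>::real) (\<rho>::real)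
            (W::nat \<Rightarrow> real^'v) (lam::nat \<Rightarrow> real) (v::nat \<Rightarrow> real^'v).
      sqnorm_d d phi = \<mu> \<longrightarrow> one_hot y \<longrightarrow>
      0 < \<bar>\<eta>\<bar> \<longrightarrow> \<bar>\<eta>\<bar> \<le> 1 \<longrightarrow> \<bar>\<rho>\<bar> \<le> \<kappa> * sqrt \<bar>\<eta>\<bar> \<longrightarrow>
      hess_z (softmax (matvec d W phi)) = (\<Sum>k\<in>{1..CARD('v)-1}. lam k *\<^sub>R outer (v k) (v k)) \<longrightarrow>
      (\<forall>k\<in>{1..CARD('v)-1}. lam k > 0) \<longrightarrow>
      (\<forall>k\<in>{1..CARD('v)-1}. \<forall>l\<in>{1..CARD('v)-1}. v k \<bullet> v l = (if k = l then 1 else 0)) \<longrightarrow>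
      (let g = softmax (matvec d W phi) - y;
           g1 = softmax (matvec d (sam_step d phi y \<eta> \<rho> W) phi) - y;
           \<rho>t = (if g = 0 then 0 else \<rho> * sqrt \<mu> / norm g)
       in \<forall>k\<in>{1..CARD('v)-1}.
            \<bar>v k \<bullet> g1 - (1 - \<eta> * \<mu> * (lam k + \<rho>t * (lam k)\<^sup>2)) * (v k \<bullet> g)\<bar> \<le> C * \<eta>\<^sup>2)"
proof -
  have C_pos: "6 * real CARD('v) * \<mu>\<^sup>2 * (2 + \<kappa>\<^sup>2) > 0"
    using assms(1) by (simp add: add_pos_nonneg)
  show ?thesis
  proof (unfold Let_def, intro exI[of _ "6 * real CARD('v) * \<mu>\<^sup>2 * (2 + \<kappa>\<^sup>2)"] conjI C_pos
      allI impI ballI, goal_cases)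
    case (1 d phi y \<eta> \<rho> W lam v k)
    have "v k \<bullet> v k = 1" using 1(8,9) by simp
    moreover have "\<forall>x. v k \<bullet> (hess_z (softmax (matvec d W phi)) *v x) = lam k * (v k \<bullet> x)"
      using 1(6,8,9) by (simp add: inner_spectral_sum_mult_vec)
    moreover have "0 \<le> lam k" using 1(7,9) by (simp add: less_imp_le)
    ultimately show ?case
      unfolding 1(1)[symmetric] by (rule eigencomponent_sam_step[OF 1(2,5)])
  qed
qed

end
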